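(* Let $\gamma > 1$ and let $I$ be a $\gamma$-stable instance of the metric Steiner tree problem with optimal Steiner tree $\mathrm{OPT}$. Let $H$ be a subgraph of $\mathrm{OPT}$ with at least one edge, and let $ab$ be an edge of $H$. If $c \in V(\mathrm{OPT}) \setminus V(H)$ satisfies $w_{ca} \le \gamma(\gamma - 1) w_{ab}$, then $ca$ is an edge of $\mathrm{OPT}$.
   Context: An instance of the metric Steiner tree problem consists of a finite set $V$ of points of a metric space with metric $d$, a set $T \subseteq V$ of terminals, and the complete graph on $V$ with edge weights $w_{uv} = d(u,v)$. Points of $V \setminus T$ are Steiner points. A Steiner tree is a tree in this complete graph whose vertex set contains all of $T$; its weight is the sum of its edge weights. For $\gamma > 1$, the instance is $\gamma$-stable if it has a minimum-weight Steiner tree $\mathrm{OPT}$ such that for every $w' : V \times V \to \mathbb{R}_{\ge 0}$ with $w_{uv} \le w'_{uv} \le \gamma w_{uv}$ for all $u,v$, every minimum-weight Steiner tree with respect to $w'$ equals $\mathrm{OPT}$. $V(\mathrm{OPT})$ and $V(H)$ denote vertex sets. *)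

theory Defs
  imports Main "HOL-Library.Library"
begin

definition metric_on :: "'a set \<Rightarrow> ('a \<Rightarrow> 'a \<Rightarrow> real) \<Rightarrow> bool" where
  "metric_on V d \<longleftrightarrow>
     (\<forall>u\<in>V. \<forall>v\<in>V. 0 \<le> d u v \<and> (d u v = 0 \<longleftrightarrow> u = v) \<and> d u v = d v u) \<and>
     (\<forall>u\<in>V. \<forall>v\<in>V. \<forall>x\<in>V. d u x \<le> d u v + d v x)"

definition edges_on :: "'a set \<Rightarrow> 'a set set" where
  "edges_on S = {{u, v} | u v. u \<in> S \<and> v \<in> S \<and> u \<noteq> v}"

definition edge_weight :: "('a \<Rightarrow> 'a \<Rightarrow> real) \<Rightarrow> 'a set \<Rightarrow> real" where
  "edge_weight d e = (THE r. \<exists>u v. e = {u, v} \<and> u \<noteq> v \<and> r = d u v)"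

definition connected_graph :: "'a set \<Rightarrow> 'a set set \<Rightarrow> bool" where
  "connected_graph S E \<longleftrightarrow>
     (\<forall>u\<in>S. \<forall>v\<in>S. (u, v) \<in> ({(x, y). {x, y} \<in> E})\<^sup>*)"

definition is_tree :: "'a set \<Rightarrow> 'a set set \<Rightarrow> bool" where
  "is_tree S E \<longleftrightarrow> finite S \<and> S \<noteq> {} \<and> E \<subseteq> edges_on S \<and>
     connected_graph S E \<and> card E = card S - 1"

definition steiner_tree :: "'a set \<Rightarrow> 'a set \<Rightarrow> 'a set \<times> 'a set set \<Rightarrow> bool" where
  "steiner_tree V T G \<longleftrightarrow> is_tree (fst G) (snd G) \<and> T \<subseteq> fst G \<and> fst G \<subseteq> V"

definition tree_weight :: "('a set \<Rightarrow> real) \<Rightarrow> 'a set \<times> 'a set set \<Rightarrow> real" where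
  "tree_weight w G = (\<Sum>e\<in>snd G. w e)"

definition min_steiner_tree ::
  "'a set \<Rightarrow> 'a set \<Rightarrow> ('a set \<Rightarrow> real) \<Rightarrow> 'a set \<times> 'a set set \<Rightarrow> bool" where
  "min_steiner_tree V T w G \<longleftrightarrow> steiner_tree V T G \<and>
     (\<forall>G'. steiner_tree V T G' \<longrightarrow> tree_weight w G \<le> tree_weight w G')"

definition perturbation ::
  "'a set \<Rightarrow> ('a \<Rightarrow> 'a \<Rightarrow> real) \<Rightarrow> real \<Rightarrow> ('a set \<Rightarrow> real) \<Rightarrow> bool" where
  "perturbation V d \<gamma> w' \<longleftrightarrow>
     (\<forall>e\<in>edges_on V. edge_weight d e \<le> w' e \<and> w' e \<le> \<gamma> * edge_weight d e)"

definition stable_wrt ::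
  "'a set \<Rightarrow> ('a \<Rightarrow> 'a \<Rightarrow> real) \<Rightarrow> 'a set \<Rightarrow> real \<Rightarrow> 'a set \<times> 'a set set \<Rightarrow> bool" where
  "stable_wrt V d T \<gamma> OPT \<longleftrightarrow> min_steiner_tree V T (edge_weight d) OPT \<and>
     (\<forall>w'. perturbation V d \<gamma> w' \<longrightarrow>
        (\<forall>G. min_steiner_tree V T w' G \<longrightarrow> G = OPT))"

definition gamma_stable ::
  "'a set \<Rightarrow> ('a \<Rightarrow> 'a \<Rightarrow> real) \<Rightarrow> 'a set \<Rightarrow> real \<Rightarrow> bool" where
  "gamma_stable V d T \<gamma> \<longleftrightarrow> (\<exists>OPT. stable_wrt V d T \<gamma> OPT)"

end

theory Submission
  imports Defs
begin

text \<open>Stability turns every exchange of a tree edge {p, q} of OPT for a non-tree edge {u, v} that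
  reconnects the tree into the strict inequality \<gamma> d(p, q) < d(u, v): otherwise, after raising
  the weights of all tree edges by the factor \<gamma>, the exchanged tree would be at most as heavy as
  OPT and OPT would not be the unique optimum. The theorem follows from two or three such
  exchanges around the edge ab, combined with the triangle inequality.\<close>

definition adj :: "'a set set \<Rightarrow> ('a \<times> 'a) set" where
  "adj F = {(x, y). {x, y} \<in> F}"

lemma adj_iff [simp]: "(x, y) \<in> adj F \<longleftrightarrow> {x, y} \<in> F"
  by (simp add: adj_def)

lemma connected_graph_iff_adj: "connected_graph S F \<longleftrightarrow> (\<forall>u\<in>S. \<forall>v\<in>S. (u, v) \<in> (adj F)\<^sup>*)"
  by (simp add: connected_graph_def adj_def)

lemma sym_adj: "sym (adj F)"
  by (rule symI) (simp add: insert_commute)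

lemma rtrancl_adj_sym: "(x, y) \<in> (adj F)\<^sup>* \<Longrightarrow> (y, x) \<in> (adj F)\<^sup>*"
  using sym_rtrancl[OF sym_adj] by (rule symD)

lemma rtrancl_adj_mono: "F \<subseteq> G \<Longrightarrow> (x, y) \<in> (adj F)\<^sup>* \<Longrightarrow> (x, y) \<in> (adj G)\<^sup>*"
proof -
  assume "F \<subseteq> G" and "(x, y) \<in> (adj F)\<^sup>*"
  moreover from \<open>F \<subseteq> G\<close> have "adj F \<subseteq> adj G" by (auto simp: adj_def)
  ultimately show ?thesis using rtrancl_mono by blast
qed

lemma rtrancl_adj_reroute:
  assumes "(p, q) \<in> (adj G)\<^sup>*" and "F - {{p, q}} \<subseteq> G"
  shows "(adj F)\<^sup>* \<subseteq> (adj G)\<^sup>*"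
proof (rule rtrancl_subset_rtrancl, clarify)
  fix x y assume xy: "(x, y) \<in> adj F"
  show "(x, y) \<in> (adj G)\<^sup>*"
  proof (cases "{x, y} = {p, q}")
    case True
    then have "x = p \<and> y = q \<or> x = q \<and> y = p" by (simp add: doubleton_eq_iff)
    then show ?thesis using assms(1) rtrancl_adj_sym[OF assms(1)] by auto
  next
    case False
    with xy assms(2) have "(x, y) \<in> adj G" by (simp add: subset_iff)
    then show ?thesis by (rule r_into_rtrancl)
  qed
qed

lemma rtrancl_adj_remove_edge:
  assumes "(v, t) \<in> (adj F)\<^sup>*"
  shows "(v, t) \<in> (adj (F - {{p, q}}))\<^sup>* \<or> (v, p) \<in> (adj (F - {{p, q}}))\<^sup>*
    \<or> (v, q) \<in> (adj (F - {{p, q}}))\<^sup>*"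
  using assms
proof (induction rule: converse_rtrancl_induct)
  case (step v u)
  show ?case
  proof (cases "{v, u} = {p, q}")
    case True
    then show ?thesis by (auto simp: doubleton_eq_iff)
  next
    case False
    then have "(v, u) \<in> adj (F - {{p, q}})" using step.hyps(1) by simp
    with step.IH show ?thesis by (meson converse_rtrancl_into_rtrancl)
  qed
qed simp

lemma rtrancl_adj_last_edge:
  assumes "(v, t) \<in> (adj F)\<^sup>*" and "v \<noteq> t"
  shows "\<exists>x. {x, t} \<in> F \<and> (v, x) \<in> (adj (F - {{x, t}}))\<^sup>*"
  using assms
proof (induction rule: converse_rtrancl_induct)
  case (step v u)
  show ?case
  proof (cases "u = t")
    case True
    with step.hyps(1) show ?thesis by auto
  next
    case False
    then obtain x where x: "{x, t} \<in> F" "(u, x) \<in> (adj (F - {{x, t}}))\<^sup>*"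
      using step.IH by blast
    have "{v, u} \<noteq> {x, t}" using False step.prems by (auto simp: doubleton_eq_iff)
    then have "(v, u) \<in> adj (F - {{x, t}})" using step.hyps(1) by simp
    with x show ?thesis by (meson converse_rtrancl_into_rtrancl)
  qed
qed simp

lemma rtrancl_adj_contract:
  fixes p q :: 'a
  assumes "(u, v) \<in> (adj F)\<^sup>*"
  defines "f \<equiv> \<lambda>x. if x = q then p else x"
  shows "(f u, f v) \<in> (adj ((`) f ` (F - {{p, q}})))\<^sup>*"
  using assms(1)
proof (induction rule: rtrancl_induct)
  case (step y z)
  show ?case
  proof (cases "{y, z} = {p, q}")
    case True
    then have "f y = f z" by (auto simp: f_def doubleton_eq_iff)
    with step.IH show ?thesis by simp
  next
    case False
    then have "f ` {y, z} \<in> (`) f ` (F - {{p, q}})" using step.hyps(2) by (intro imageI) simp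
    then have "(f y, f z) \<in> adj ((`) f ` (F - {{p, q}}))" by simp
    with step.IH show ?thesis by (rule rtrancl_into_rtrancl)
  qed
qed simp

lemma doubleton_in_edges_on_iff [simp]:
  "{x, y} \<in> edges_on S \<longleftrightarrow> x \<in> S \<and> y \<in> S \<and> x \<noteq> y"
  unfolding edges_on_def by (smt (verit) doubleton_eq_iff mem_Collect_eq)

lemma edges_onE:
  assumes "e \<in> edges_on S"
  obtains x y where "e = {x, y}" "x \<in> S" "y \<in> S" "x \<noteq> y"
  using assms unfolding edges_on_def by blast

lemma finite_edges_on: "finite S \<Longrightarrow> finite (edges_on S)"
  by (rule finite_subset[of _ "Pow S"]) (auto elim: edges_onE)

text \<open>Contracting an edge {p, v} of a connected graph yields a connected graph with one vertex
  and at least one edge less.\<close>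
lemma connected_graph_card_le:
  assumes "finite S" and "F \<subseteq> edges_on S" and "connected_graph S F"
  shows "card S \<le> card F + 1"
  using assms
proof (induction S arbitrary: F rule: finite_psubset_induct)
  case (psubset S)
  show ?case
  proof (cases "card S \<le> Suc 0")
    case False
    then obtain u v where uv: "u \<in> S" "v \<in> S" "u \<noteq> v"
      using card_le_Suc0_iff_eq[OF psubset.hyps(1)] by blast
    with psubset.prems(2) have "(u, v) \<in> (adj F)\<^sup>*" by (simp add: connected_graph_iff_adj)
    with uv(3) obtain p where pv: "{p, v} \<in> F" by (metis adj_iff rtranclE)
    with psubset.prems(1) have "{p, v} \<in> edges_on S" by blast
    then have "p \<in> S" "p \<noteq> v" by simp_all
    define f where "f = (\<lambda>x. if x = v then p else x)"
    define F' where "F' = (`) f ` (F - {{p, v}})"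
    have "F' \<subseteq> edges_on (S - {v})"
    proof
      fix e' assume "e' \<in> F'"
      then obtain e where e: "e \<in> F" "e \<noteq> {p, v}" "e' = f ` e" by (auto simp: F'_def)
      with psubset.prems(1) have "e \<in> edges_on S" by blast
      then obtain x y where xy: "e = {x, y}" "x \<in> S" "y \<in> S" "x \<noteq> y" by (rule edges_onE)
      have "f x \<noteq> f y" using xy(1,4) e(2) unfolding f_def by (metis doubleton_eq_iff)
      moreover have "f x \<in> S - {v}" "f y \<in> S - {v}"
        using xy(2,3) \<open>p \<in> S\<close> \<open>p \<noteq> v\<close> by (simp_all add: f_def)
      ultimately show "e' \<in> edges_on (S - {v})" using e(3) xy(1) by simp
    qed
    moreover have "connected_graph (S - {v}) F'"
      unfolding connected_graph_iff_adj
    proof (intro ballI)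
      fix x y assume "x \<in> S - {v}" "y \<in> S - {v}"
      with psubset.prems(2) have "(x, y) \<in> (adj F)\<^sup>*" by (simp add: connected_graph_iff_adj)
      then have "(f x, f y) \<in> (adj F')\<^sup>*" unfolding F'_def f_def by (rule rtrancl_adj_contract)
      moreover have "f x = x" "f y = y" using \<open>x \<in> S - {v}\<close> \<open>y \<in> S - {v}\<close> by (simp_all add: f_def)
      ultimately show "(x, y) \<in> (adj F')\<^sup>*" by simp
    qed
    ultimately have "card (S - {v}) \<le> card F' + 1"
      using psubset.IH[of "S - {v}"] psubset.hyps(1) uv(2) by blast
    moreover have "finite F"
      using psubset.prems(1) finite_edges_on[OF psubset.hyps(1)] by (rule finite_subset)
    then have "card F' \<le> card F - 1"
      using card_image_le[of "F - {{p, v}}" "(`) f"] pv by (simp add: F'_def)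
    moreover have "card F > 0" using \<open>finite F\<close> pv card_gt_0_iff by blast
    ultimately show ?thesis using psubset.hyps(1) uv(2) by simp
  qed simp
qed

lemma is_tree_finite_edges: "is_tree S E \<Longrightarrow> finite E"
  unfolding is_tree_def using finite_edges_on finite_subset by blast

lemma is_tree_edge_is_bridge:
  assumes tree: "is_tree S E" and pq: "{p, q} \<in> E"
  shows "(p, q) \<notin> (adj (E - {{p, q}}))\<^sup>*"
proof
  assume "(p, q) \<in> (adj (E - {{p, q}}))\<^sup>*"
  then have "(adj E)\<^sup>* \<subseteq> (adj (E - {{p, q}}))\<^sup>*" by (rule rtrancl_adj_reroute) simp
  with tree have "connected_graph S (E - {{p, q}})"
    unfolding is_tree_def connected_graph_iff_adj by blast
  with tree have "card S \<le> card (E - {{p, q}}) + 1"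
    unfolding is_tree_def by (intro connected_graph_card_le) auto
  moreover have "card (E - {{p, q}}) = card E - 1" "card E > 0"
    using pq is_tree_finite_edges[OF tree] by (auto simp: card_gt_0_iff)
  ultimately show False using tree unfolding is_tree_def by simp
qed

lemma is_tree_exchange:
  assumes tree: "is_tree S E" and pq: "{p, q} \<in> E" and f: "f \<in> edges_on S" "f \<notin> E"
    and reconnect: "(p, q) \<in> (adj (insert f (E - {{p, q}})))\<^sup>*"
  shows "is_tree S (insert f (E - {{p, q}}))"
proof -
  have "(adj E)\<^sup>* \<subseteq> (adj (insert f (E - {{p, q}})))\<^sup>*"
    using reconnect by (rule rtrancl_adj_reroute) blast
  with tree have "connected_graph S (insert f (E - {{p, q}}))"
    unfolding is_tree_def connected_graph_iff_adj by blast
  moreover have "card (insert f (E - {{p, q}})) = card E"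
  proof -
    have "finite E" using tree by (rule is_tree_finite_edges)
    then have "card (insert f (E - {{p, q}})) = Suc (card (E - {{p, q}}))"
      using f(2) by (intro card_insert_disjoint) auto
    also have "\<dots> = card E" using \<open>finite E\<close> pq by (rule card_Suc_Diff1)
    finally show ?thesis .
  qed
  ultimately show ?thesis using tree f(1) unfolding is_tree_def by auto
qed

lemma edge_weight_eq:
  assumes "metric_on V d" and "u \<in> V" "v \<in> V" "u \<noteq> v"
  shows "edge_weight d {u, v} = d u v"
  unfolding edge_weight_def
proof (rule the_equality)
  fix r assume "\<exists>u' v'. {u, v} = {u', v'} \<and> u' \<noteq> v' \<and> r = d u' v'"
  then obtain u' v' where "{u, v} = {u', v'}" "r = d u' v'" by blast
  with assms show "r = d u v" unfolding metric_on_def by (metis doubleton_eq_iff)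
qed (use assms(4) in blast)

lemma edge_weight_nonneg:
  assumes "metric_on V d" and "e \<in> edges_on V"
  shows "0 \<le> edge_weight d e"
proof -
  obtain u v where "e = {u, v}" "u \<in> V" "v \<in> V" "u \<noteq> v" using assms(2) by (rule edges_onE)
  with assms(1) show ?thesis by (simp add: edge_weight_eq metric_on_def)
qed

lemma perturbation_refl:
  assumes "metric_on V d" and "1 \<le> \<gamma>"
  shows "perturbation V d \<gamma> (edge_weight d)"
  unfolding perturbation_def
proof (intro ballI conjI order.refl)
  fix e assume "e \<in> edges_on V"
  with assms(1) have "0 \<le> edge_weight d e" by (rule edge_weight_nonneg)
  with assms(2) show "edge_weight d e \<le> \<gamma> * edge_weight d e" by (simp add: mult_le_cancel_right1)
qed

lemma finite_steiner_trees: "finite V \<Longrightarrow> finite {G. steiner_tree V T G}"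
proof (rule finite_subset[of _ "Pow V \<times> Pow (Pow V)"])
  show "{G. steiner_tree V T G} \<subseteq> Pow V \<times> Pow (Pow V)"
  proof (clarify)
    fix S E assume "steiner_tree V T (S, E)"
    then have "S \<subseteq> V" "E \<subseteq> edges_on S" unfolding steiner_tree_def is_tree_def by simp_all
    then show "S \<in> Pow V \<and> E \<in> Pow (Pow V)" by (auto elim!: edges_onE)
  qed
qed simp

text \<open>Finiteness of V is what guarantees that a minimum Steiner tree for w' exists at all.\<close>
lemma stable_wrt_min_steiner_tree:
  assumes "finite V" and stable: "stable_wrt V d T \<gamma> OPT" and "perturbation V d \<gamma> w'"
  shows "min_steiner_tree V T w' OPT"
proof -
  let ?ST = "{G. steiner_tree V T G}"
  have "OPT \<in> ?ST" using stable unfolding stable_wrt_def min_steiner_tree_def by simp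
  then obtain G where "is_arg_min (tree_weight w') (\<lambda>G. G \<in> ?ST) G"
    using ex_is_arg_min_if_finite[OF finite_steiner_trees[OF assms(1)]] by blast
  then have "min_steiner_tree V T w' G"
    unfolding is_arg_min_linorder min_steiner_tree_def by simp
  moreover have "G = OPT"
    using stable assms(3) calculation unfolding stable_wrt_def by blast
  ultimately show ?thesis by simp
qed

lemma stable_wrt_unique:
  assumes "finite V" and stable: "stable_wrt V d T \<gamma> OPT" and "perturbation V d \<gamma> w'"
    and "steiner_tree V T G" and "tree_weight w' G \<le> tree_weight w' OPT"
  shows "G = OPT"
proof -
  have "min_steiner_tree V T w' G"
    using stable_wrt_min_steiner_tree[OF assms(1-3)] assms(4,5)
    unfolding min_steiner_tree_def by fastforce
  with stable assms(3) show ?thesis unfolding stable_wrt_def by blast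
qed

lemma gamma_stable_imp_stable_wrt:
  assumes "gamma_stable V d T \<gamma>" and "metric_on V d" and "1 \<le> \<gamma>"
    and "min_steiner_tree V T (edge_weight d) G"
  shows "stable_wrt V d T \<gamma> G"
proof -
  obtain OPT where OPT: "stable_wrt V d T \<gamma> OPT"
    using assms(1) unfolding gamma_stable_def by blast
  moreover have "G = OPT"
    using OPT perturbation_refl[OF assms(2,3)] assms(4) unfolding stable_wrt_def by blast
  ultimately show ?thesis by simp
qed

locale stable_steiner_instance =
  fixes V T :: "'a set" and d :: "'a \<Rightarrow> 'a \<Rightarrow> real" and \<gamma> :: real
    and S :: "'a set" and E :: "'a set set"
  assumes finite_V: "finite V" and metric: "metric_on V d" and gamma_ge_1: "1 \<le> \<gamma>"
    and stable: "stable_wrt V d T \<gamma> (S, E)"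
begin

lemma OPT_steiner_tree: "steiner_tree V T (S, E)"
  using stable unfolding stable_wrt_def min_steiner_tree_def by simp

lemma OPT_tree: "is_tree S E"
  using OPT_steiner_tree unfolding steiner_tree_def by simp

lemma S_subset_V: "S \<subseteq> V"
  using OPT_steiner_tree unfolding steiner_tree_def by simp

lemma OPT_edgeD:
  assumes "{u, v} \<in> E"
  shows "u \<in> S" and "v \<in> S" and "u \<noteq> v"
proof -
  from assms OPT_tree have "{u, v} \<in> edges_on S" unfolding is_tree_def by blast
  then show "u \<in> S" and "v \<in> S" and "u \<noteq> v" by simp_all
qed

lemma OPT_connected: "u \<in> S \<Longrightarrow> v \<in> S \<Longrightarrow> (u, v) \<in> (adj E)\<^sup>*"
  using OPT_tree unfolding is_tree_def connected_graph_iff_adj by blast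

lemma dist_pos: "u \<in> S \<Longrightarrow> v \<in> S \<Longrightarrow> u \<noteq> v \<Longrightarrow> 0 < d u v"
  using metric S_subset_V unfolding metric_on_def by (metis less_eq_real_def subsetD)

lemma dist_commute: "u \<in> S \<Longrightarrow> v \<in> S \<Longrightarrow> d u v = d v u"
  using metric S_subset_V unfolding metric_on_def by blast

lemma dist_triangle: "u \<in> S \<Longrightarrow> v \<in> S \<Longrightarrow> x \<in> S \<Longrightarrow> d u x \<le> d u v + d v x"
  using metric S_subset_V unfolding metric_on_def by blast

lemma exchange_weight:
  assumes pq: "{p, q} \<in> E" and uv: "u \<in> S" "v \<in> S" "u \<noteq> v" "{u, v} \<notin> E"
    and reconnect: "(p, q) \<in> (adj (insert {u, v} (E - {{p, q}})))\<^sup>*"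
  shows "\<gamma> * d p q < d u v"
proof (rule ccontr)
  assume "\<not> \<gamma> * d p q < d u v"
  then have cheap: "d u v \<le> \<gamma> * d p q" by simp
  define w' where "w' = (\<lambda>e. if e \<in> E then \<gamma> * edge_weight d e else edge_weight d e)"
  define E' where "E' = insert {u, v} (E - {{p, q}})"
  have "perturbation V d \<gamma> w'"
    using perturbation_refl[OF metric gamma_ge_1] unfolding perturbation_def w'_def by simp
  moreover have "steiner_tree V T (S, E')"
    using is_tree_exchange[OF OPT_tree pq _ uv(4) reconnect] uv(1-3) OPT_steiner_tree
    unfolding steiner_tree_def E'_def by simp
  moreover have "tree_weight w' (S, E') \<le> tree_weight w' (S, E)"
  proof -
    have "finite (E - {{p, q}})" using is_tree_finite_edges[OF OPT_tree] by simp
    then have "tree_weight w' (S, E') = d u v + sum w' (E - {{p, q}})"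
      using uv S_subset_V metric
      by (simp add: tree_weight_def E'_def w'_def edge_weight_eq subsetD)
    moreover have "tree_weight w' (S, E) = \<gamma> * d p q + sum w' (E - {{p, q}})"
      using pq OPT_edgeD[OF pq] S_subset_V metric is_tree_finite_edges[OF OPT_tree]
      by (simp add: tree_weight_def w'_def edge_weight_eq subsetD sum.remove)
    ultimately show ?thesis using cheap by simp
  qed
  ultimately have "(S, E') = (S, E)" by (rule stable_wrt_unique[OF finite_V stable])
  with uv(4) show False unfolding E'_def by blast
qed

lemma exchange_weight_at_common_vertex:
  assumes ab: "{a, b} \<in> E" and "{b, y} \<in> E" and "a \<noteq> y" and "{a, y} \<notin> E"
  shows "\<gamma> * d a b < d a y"
proof (rule exchange_weight[OF ab])
  have "{y, b} \<in> E - {{a, b}}" using assms(2,3) by (auto simp: insert_commute doubleton_eq_iff)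
  then have "(a, y) \<in> adj (insert {a, y} (E - {{a, b}}))"
    and "(y, b) \<in> adj (insert {a, y} (E - {{a, b}}))" by simp_all
  then show "(a, b) \<in> (adj (insert {a, y} (E - {{a, b}})))\<^sup>*"
    by (rule rtrancl_into_rtrancl[OF r_into_rtrancl])
qed (use assms OPT_edgeD in auto)

text \<open>For \<gamma> \<ge> 2 the triangle inequality makes the third side of a path a-b-y affordable in
  exchange for the longer of its two edges.\<close>
lemma no_adjacent_edges_if_gamma_ge_2:
  assumes "2 \<le> \<gamma>" and ab: "{a, b} \<in> E" and b_y: "{b, y} \<in> E" and "a \<noteq> y"
  shows False
proof -
  have S: "a \<in> S" "b \<in> S" "y \<in> S" using OPT_edgeD[OF ab] OPT_edgeD[OF b_y] by simp_all
  have "{a, y} \<notin> E"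
  proof
    assume "{a, y} \<in> E"
    then have "(a, y) \<in> adj (E - {{a, b}})" "(y, b) \<in> adj (E - {{a, b}})"
      using b_y \<open>a \<noteq> y\<close> OPT_edgeD(3)[OF b_y]
      by (auto simp: insert_commute doubleton_eq_iff)
    then have "(a, b) \<in> (adj (E - {{a, b}}))\<^sup>*" by (rule rtrancl_into_rtrancl[OF r_into_rtrancl])
    with is_tree_edge_is_bridge[OF OPT_tree ab] show False ..
  qed
  then have "\<gamma> * d a b < d a y" and "\<gamma> * d y b < d y a"
    using exchange_weight_at_common_vertex[OF ab b_y \<open>a \<noteq> y\<close>]
      exchange_weight_at_common_vertex[of y b a] ab b_y \<open>a \<noteq> y\<close>
    by (auto simp: insert_commute)
  moreover have "d a y \<le> d a b + d b y" "d y a = d a y" "d b y = d y b"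
    using S by (simp_all add: dist_triangle dist_commute)
  ultimately have "\<gamma> * (d a b + d y b) < 2 * (d a b + d y b)" unfolding distrib_left by linarith
  moreover have "0 \<le> d a b + d y b"
    using S OPT_edgeD(3)[OF ab] OPT_edgeD(3)[OF b_y] by (simp add: dist_pos less_imp_le)
  with assms(1) have "2 * (d a b + d y b) \<le> \<gamma> * (d a b + d y b)" by (rule mult_right_mono)
  ultimately show False by simp
qed

text \<open>Removing {a, b} splits the tree into the side of a and the side of b. If c lies on the side
  of b, the edge {c, a} reconnects them, which forces \<gamma> > 2. If c lies on the side of a, let x be
  the neighbour of a towards c: exchanging {x, a} for {c, a} shows that {x, a} is short, and then
  {x, b} is cheap enough to replace {a, b}.\<close>
lemma edge_to_close_vertex:
  assumes ab: "{a, b} \<in> E" and c: "c \<in> S" "c \<noteq> a" "c \<noteq> b"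
    and close: "d c a \<le> \<gamma> * (\<gamma> - 1) * d a b"
  shows "{c, a} \<in> E"
proof (rule ccontr)
  assume ca: "{c, a} \<notin> E"
  let ?E0 = "E - {{a, b}}"
  have S: "a \<in> S" "b \<in> S" "a \<noteq> b" using OPT_edgeD[OF ab] by simp_all
  have "(c, a) \<in> (adj E)\<^sup>*" using c(1) S(1) by (rule OPT_connected)
  then have "(c, a) \<in> (adj ?E0)\<^sup>* \<or> (c, b) \<in> (adj ?E0)\<^sup>*"
    using rtrancl_adj_remove_edge[of c a E a b] by simp
  then consider (b_side) "(c, b) \<in> (adj ?E0)\<^sup>*"
    | (a_side) "(c, a) \<in> (adj ?E0)\<^sup>*" "(c, b) \<notin> (adj ?E0)\<^sup>*" by blast
  then show False
  proof cases
    case b_side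
    have "(a, c) \<in> adj (insert {c, a} ?E0)" by (simp add: insert_commute)
    moreover have "(c, b) \<in> (adj (insert {c, a} ?E0))\<^sup>*"
      using rtrancl_adj_mono[OF subset_insertI b_side] .
    ultimately have "(a, b) \<in> (adj (insert {c, a} ?E0))\<^sup>*" by (rule converse_rtrancl_into_rtrancl)
    then have "\<gamma> * d a b < d c a" by (rule exchange_weight[OF ab c(1) S(1) c(2) ca])
    with close have "\<gamma> * d a b * 1 < \<gamma> * d a b * (\<gamma> - 1)" by (simp only: mult_ac mult_1_right)
    moreover have "0 < \<gamma> * d a b" using gamma_ge_1 dist_pos[OF S] by simp
    ultimately have "1 < \<gamma> - 1" using mult_less_cancel_left_pos by blast
    then have "2 \<le> \<gamma>" by simp
    from b_side c(3) obtain y where "(y, b) \<in> adj ?E0" by (blast elim: rtranclE)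
    then have "{y, b} \<in> E" and "a \<noteq> y" by (auto simp: doubleton_eq_iff)
    then have "{b, y} \<in> E" by (simp add: insert_commute)
    from no_adjacent_edges_if_gamma_ge_2[OF \<open>2 \<le> \<gamma>\<close> ab this \<open>a \<noteq> y\<close>] show False .
  next
    case a_side
    obtain x where xa: "{x, a} \<in> ?E0" and cx: "(c, x) \<in> (adj (?E0 - {{x, a}}))\<^sup>*"
      using rtrancl_adj_last_edge[OF a_side(1) c(2)] by blast
    have x: "x \<in> S" "x \<noteq> a" "x \<noteq> b" using OPT_edgeD[of x a] xa by (auto simp: doubleton_eq_iff)
    have "(x, c) \<in> (adj (insert {c, a} (E - {{x, a}})))\<^sup>*"
      using rtrancl_adj_sym[OF cx] by (rule rtrancl_adj_mono[rotated]) blast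
    moreover have "(c, a) \<in> adj (insert {c, a} (E - {{x, a}}))" by simp
    ultimately have "(x, a) \<in> (adj (insert {c, a} (E - {{x, a}})))\<^sup>*" by (rule rtrancl_into_rtrancl)
    with xa have "\<gamma> * d x a < d c a" using exchange_weight c(1) S(1) c(2) ca by blast
    with close have "\<gamma> * d x a < \<gamma> * ((\<gamma> - 1) * d a b)" by (simp only: mult.assoc)
    then have short: "d x a < (\<gamma> - 1) * d a b" using gamma_ge_1 by simp
    have "{b, x} \<notin> E"
    proof
      assume "{b, x} \<in> E"
      with x(2) have "(x, b) \<in> adj ?E0" by (auto simp: doubleton_eq_iff insert_commute)
      moreover have "(c, x) \<in> (adj ?E0)\<^sup>*" using cx by (rule rtrancl_adj_mono[rotated]) blast
      ultimately have "(c, b) \<in> (adj ?E0)\<^sup>*" by (rule rtrancl_into_rtrancl[rotated])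
      with a_side(2) show False ..
    qed
    moreover have "{a, x} \<in> E" "{b, a} \<in> E" using xa ab by (simp_all add: insert_commute)
    ultimately have "\<gamma> * d b a < d b x"
      using exchange_weight_at_common_vertex[of b a x] x(3) by blast
    moreover have "d b x \<le> d b a + d a x" using S(2,1) x(1) by (rule dist_triangle)
    moreover have "d a x = d x a" "d b a = d a b" using S x by (simp_all add: dist_commute)
    ultimately show False using short by (simp add: algebra_simps)
  qed
qed

end

theorem mainTheorem7:
  fixes V T :: "'a set" and d :: "'a \<Rightarrow> 'a \<Rightarrow> real" and \<gamma> :: real
    and S :: "'a set" and E :: "'a set set"
    and SH :: "'a set" and EH :: "'a set set" and a b c :: 'a
  assumes "finite V" and "T \<subseteq> V" and "metric_on V d" and "\<gamma> > 1"
    and "gamma_stable V d T \<gamma>"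
    and "min_steiner_tree V T (edge_weight d) (S, E)"
    and "SH \<subseteq> S" and "EH \<subseteq> E" and "EH \<subseteq> edges_on SH" and "EH \<noteq> {}"
    and "{a, b} \<in> EH"
    and "c \<in> S - SH"
    and "edge_weight d {c, a} \<le> \<gamma> * (\<gamma> - 1) * edge_weight d {a, b}"
  shows "{c, a} \<in> E"
proof -
  have "stable_wrt V d T \<gamma> (S, E)"
    using assms(3-6) by (intro gamma_stable_imp_stable_wrt) simp_all
  with assms(1,3,4) interpret stable_steiner_instance V T d \<gamma> S E
    by unfold_locales simp_all
  have "{a, b} \<in> edges_on SH" using assms(9,11) by blast
  then have ab: "a \<in> SH" "b \<in> SH" "a \<noteq> b" by simp_all
  with assms(12) have c: "c \<in> S" "c \<noteq> a" "c \<noteq> b" by auto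
  have "{a, b} \<in> E" using assms(8,11) by blast
  moreover have "d c a \<le> \<gamma> * (\<gamma> - 1) * d a b"
    using assms(13) ab c assms(7) S_subset_V by (simp add: edge_weight_eq[OF metric] subset_iff)
  ultimately show ?thesis using edge_to_close_vertex c by blast
qed

end
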